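(* Let $M\in S_d^+$, let $\mathcal T$ be an $M$-reduced mesh and $\Lambda$ the associated Hopf–Lax operator. Then the map $D_M:\mathbb Z^d\to\mathbb R_+$, $D_M(z)=\|z\|_M$, is a discrete sub-solution, i.e. $D_M(0)=0$ and $D_M(z)\le\Lambda(D_M,z)$ for all $z\in\mathbb Z^d\setminus\{0\}$.
   Context: $S_d^+$ is the set of $d\times d$ symmetric positive definite matrices; $\langle u,v\rangle_M:=u^TMv$, $\|u\|_M:=\sqrt{\langle u,u\rangle_M}$. An $M$-reduced mesh is a finite conforming mesh $\mathcal T$ of simplices in $\mathbb R^d$ such that: (I) the union of its simplices is a neighborhood of the origin; (II) the vertices of each $T\in\mathcal T$ lie in $\mathbb Z^d$ and $T$ has volume $1/d!$; (III) each $T\in\mathcal T$ has the origin as a vertex, and its other vertices $v_1,\dots,v_d$ satisfy $\langle v_i,v_j\rangle_M\ge0$ for all $i,j$. For $\delta:\mathbb Z^d\to\mathbb R_+\cup\{\infty\}$ and $z\in\mathbb Z^d$, $\Lambda(\delta,z):=\min\{\|\sum_{i=1}^k\alpha_iv_i\|_M+\sum_{i=1}^k\alpha_i\delta(z+v_i)\}$ over $1\le k\le d$, $\alpha_i\ge0$ with $\sum_i\alpha_i=1$, and non-zero vertices $v_1,\dots,v_k$ of a common simplex of $\mathcal T$ (convention $0\times\infty=0$). *)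

theory Defs
  imports "HOL-Analysis.Analysis"
begin

definition rvec :: "int^'n \<Rightarrow> real^'n" where
  "rvec v = (\<chi> i. real_of_int (v $ i))"

definition sym_pos_def :: "real^'n^'n \<Rightarrow> bool" where
  "sym_pos_def M \<longleftrightarrow> transpose M = M \<and> (\<forall>x. x \<noteq> 0 \<longrightarrow> x \<bullet> (M *v x) > 0)"

definition innerM :: "real^'n^'n \<Rightarrow> real^'n \<Rightarrow> real^'n \<Rightarrow> real" where
  "innerM M u v = u \<bullet> (M *v v)"

definition normM :: "real^'n^'n \<Rightarrow> real^'n \<Rightarrow> real" where
  "normM M u = sqrt (innerM M u u)"

text \<open>A simplex is represented by its (finite) vertex set; the mesh is a finite set of simplices.\<close>
definition reduced_mesh :: "real^'n^'n \<Rightarrow> (int^'n) set set \<Rightarrow> bool" where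
  "reduced_mesh M \<T> \<longleftrightarrow>
     finite \<T> \<and>
     \<comment> \<open>conforming: two simplices meet in their common face\<close>
     (\<forall>T1\<in>\<T>. \<forall>T2\<in>\<T>.
        convex hull (rvec ` T1) \<inter> convex hull (rvec ` T2) = convex hull (rvec ` (T1 \<inter> T2))) \<and>
     \<comment> \<open>(I) neighborhood of the origin\<close>
     0 \<in> interior (\<Union>T\<in>\<T>. convex hull (rvec ` T)) \<and>
     (\<forall>T\<in>\<T>.
        \<comment> \<open>simplex with d+1 integer vertices and volume 1/d! (II)\<close>
        finite T \<and> card T = CARD('n) + 1 \<and>
        measure lebesgue (convex hull (rvec ` T)) = 1 / fact CARD('n) \<and>
        \<comment> \<open>(III)\<close>
        0 \<in> T \<and>
        (\<forall>u\<in>T - {0}. \<forall>v\<in>T - {0}. innerM M (rvec u) (rvec v) \<ge> 0))"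

text \<open>Hopf-Lax operator; delta takes values in [0,\<infinity>] (ereal, where 0 * \<infinity> = 0).\<close>
definition hopf_lax :: "real^'n^'n \<Rightarrow> (int^'n) set set \<Rightarrow> (int^'n \<Rightarrow> ereal) \<Rightarrow> int^'n \<Rightarrow> ereal" where
  "hopf_lax M \<T> \<delta> z = Inf
     { ereal (normM M (\<Sum>v\<in>S. \<alpha> v *\<^sub>R rvec v)) + (\<Sum>v\<in>S. ereal (\<alpha> v) * \<delta> (z + v))
       | S \<alpha>. (\<exists>T\<in>\<T>. S \<subseteq> T - {0}) \<and> S \<noteq> {} \<and> card S \<le> CARD('n) \<and>
               (\<forall>v\<in>S. \<alpha> v \<ge> 0) \<and> sum \<alpha> S = 1 }"

end

theory Submission
  imports Defs
begin

text \<open>Only the triangle inequality of \<open>\<parallel>\<cdot>\<parallel>\<^sub>M\<close> is needed, not the mesh structure: since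
  \<open>\<Sum>\<alpha>\<^sub>i = 1\<close>, the point \<open>z\<close> is the convex combination \<open>\<Sum>\<alpha>\<^sub>i (z + v\<^sub>i)\<close> minus \<open>\<Sum>\<alpha>\<^sub>i v\<^sub>i\<close>, so
  \<open>\<parallel>z\<parallel>\<^sub>M \<le> \<parallel>\<Sum>\<alpha>\<^sub>i v\<^sub>i\<parallel>\<^sub>M + \<Sum>\<alpha>\<^sub>i \<parallel>z + v\<^sub>i\<parallel>\<^sub>M\<close> for every candidate in the infimum defining \<open>\<Lambda>\<close>.\<close>

lemma quadratic_nonneg_imp_square_le:
  fixes a b c :: real
  assumes "0 \<le> c" and nonneg: "\<And>t. 0 \<le> a + 2 * t * b + t\<^sup>2 * c"
  shows "b\<^sup>2 \<le> a * c"
proof (cases "c = 0")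
  case True
  have "b = 0"
  proof (rule ccontr)
    assume "b \<noteq> 0"
    have "0 \<le> a + 2 * (- (a + 1) / (2 * b)) * b" using nonneg[of "- (a + 1) / (2 * b)"] True by simp
    also have "\<dots> = -1" using \<open>b \<noteq> 0\<close> by (simp add: field_simps)
    finally show False by simp
  qed
  then show ?thesis using True by simp
next
  case False
  with \<open>0 \<le> c\<close> have c: "c > 0" by simp
  have "0 \<le> a + 2 * (- b / c) * b + (- b / c)\<^sup>2 * c" by (rule nonneg)
  also have "\<dots> = a - b\<^sup>2 / c" using c by (simp add: field_simps power2_eq_square)
  finally show ?thesis using c by (simp add: field_simps mult.commute)
qed

lemma innerM_add_left: "innerM M (u + w) v = innerM M u v + innerM M w v"
  by (simp add: innerM_def inner_add_left)

lemma innerM_add_right: "innerM M u (v + w) = innerM M u v + innerM M u w"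
  by (simp add: innerM_def matrix_vector_right_distrib inner_add_right)

lemma innerM_scaleR_left: "innerM M (c *\<^sub>R u) v = c * innerM M u v"
  by (simp add: innerM_def)

lemma innerM_scaleR_right: "innerM M u (c *\<^sub>R v) = c * innerM M u v"
  by (simp add: innerM_def matrix_vector_mult_scaleR)

lemma innerM_commute:
  assumes "transpose M = M"
  shows "innerM M u v = innerM M v u"
  unfolding innerM_def by (metis assms dot_lmul_matrix inner_commute vector_transpose_matrix)

lemma innerM_self_nonneg:
  assumes "sym_pos_def M"
  shows "0 \<le> innerM M u u"
  using assms unfolding sym_pos_def_def innerM_def
  by (cases "u = 0") (auto intro: less_imp_le)

lemma innerM_Cauchy_Schwarz:
  assumes "sym_pos_def M"
  shows "(innerM M u v)\<^sup>2 \<le> innerM M u u * innerM M v v"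
proof (rule quadratic_nonneg_imp_square_le)
  show "0 \<le> innerM M v v" using assms by (rule innerM_self_nonneg)
  have sym: "transpose M = M" using assms by (simp add: sym_pos_def_def)
  fix t
  have "0 \<le> innerM M (u + t *\<^sub>R v) (u + t *\<^sub>R v)" using assms by (rule innerM_self_nonneg)
  also have "\<dots> = innerM M u u + 2 * t * innerM M u v + t\<^sup>2 * innerM M v v"
    using innerM_commute[OF sym, of v u]
    by (simp add: innerM_add_left innerM_add_right innerM_scaleR_left innerM_scaleR_right
        power2_eq_square algebra_simps)
  finally show "0 \<le> innerM M u u + 2 * t * innerM M u v + t\<^sup>2 * innerM M v v" .
qed

lemma normM_zero [simp]: "normM M 0 = 0"
  by (simp add: normM_def innerM_def)

lemma normM_scaleR: "normM M (c *\<^sub>R u) = \<bar>c\<bar> * normM M u"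
proof -
  have "innerM M (c *\<^sub>R u) (c *\<^sub>R u) = c\<^sup>2 * innerM M u u"
    by (simp add: innerM_scaleR_left innerM_scaleR_right power2_eq_square)
  then show ?thesis by (simp add: normM_def real_sqrt_mult)
qed

lemma normM_triangle:
  assumes "sym_pos_def M"
  shows "normM M (u + v) \<le> normM M u + normM M v"
proof -
  let ?a = "innerM M u u" and ?b = "innerM M u v" and ?c = "innerM M v v"
  have a: "0 \<le> ?a" and c: "0 \<le> ?c" using innerM_self_nonneg[OF assms] by auto
  have "?b \<le> sqrt (?b\<^sup>2)" by simp
  also have "\<dots> \<le> sqrt ?a * sqrt ?c"
    using real_sqrt_le_mono[OF innerM_Cauchy_Schwarz[OF assms]] by (simp add: real_sqrt_mult)
  finally have b: "?b \<le> sqrt ?a * sqrt ?c" .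
  have sym: "transpose M = M" using assms by (simp add: sym_pos_def_def)
  have "innerM M (u + v) (u + v) = ?a + 2 * ?b + ?c"
    using innerM_commute[OF sym, of v u] by (simp add: innerM_add_left innerM_add_right)
  also have "\<dots> \<le> (sqrt ?a + sqrt ?c)\<^sup>2"
    using a b c by (simp add: power2_eq_square algebra_simps)
  finally show ?thesis
    unfolding normM_def using a c by (simp add: real_le_lsqrt)
qed

lemma normM_sum_le:
  assumes "sym_pos_def M"
  shows "normM M (\<Sum>x\<in>S. f x) \<le> (\<Sum>x\<in>S. normM M (f x))"
proof (induction S rule: infinite_finite_induct)
  case (insert x F)
  then show ?case using normM_triangle[OF assms, of "f x" "sum f F"] by simp
qed simp_all

lemma normM_le_convex_combination:
  assumes "sym_pos_def M" and "\<forall>v\<in>S. 0 \<le> \<alpha> v" and "sum \<alpha> S = 1"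
  shows "normM M x \<le> normM M (\<Sum>v\<in>S. \<alpha> v *\<^sub>R y v) + (\<Sum>v\<in>S. \<alpha> v * normM M (x + y v))"
proof -
  have "x = (\<Sum>v\<in>S. \<alpha> v *\<^sub>R x)"
    using assms(3) by (simp flip: scaleR_sum_left)
  then have x: "x = (\<Sum>v\<in>S. \<alpha> v *\<^sub>R (x + y v)) + (- 1) *\<^sub>R (\<Sum>v\<in>S. \<alpha> v *\<^sub>R y v)"
    by (simp add: scaleR_add_right sum.distrib)
  have "normM M x \<le> normM M (\<Sum>v\<in>S. \<alpha> v *\<^sub>R (x + y v)) + normM M ((- 1) *\<^sub>R (\<Sum>v\<in>S. \<alpha> v *\<^sub>R y v))"
    by (subst x) (rule normM_triangle[OF assms(1)])
  also have "normM M ((- 1) *\<^sub>R (\<Sum>v\<in>S. \<alpha> v *\<^sub>R y v)) = normM M (\<Sum>v\<in>S. \<alpha> v *\<^sub>R y v)"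
    using normM_scaleR[of M "- 1"] by simp
  also have "normM M (\<Sum>v\<in>S. \<alpha> v *\<^sub>R (x + y v)) \<le> (\<Sum>v\<in>S. normM M (\<alpha> v *\<^sub>R (x + y v)))"
    using assms(1) by (rule normM_sum_le)
  also have "\<dots> = (\<Sum>v\<in>S. \<alpha> v * normM M (x + y v))"
    using assms(2) by (intro sum.cong) (auto simp: normM_scaleR)
  finally show ?thesis by simp
qed

lemma rvec_zero [simp]: "rvec 0 = 0"
  by (simp add: rvec_def vec_eq_iff)

lemma rvec_add: "rvec (a + b) = rvec a + rvec b"
  by (simp add: rvec_def vec_eq_iff)

theorem proposition1p2:
  fixes M :: "real^'n^'n" and \<T> :: "(int^'n) set set"
  assumes "sym_pos_def M"
    and "reduced_mesh M \<T>"
  shows "normM M (rvec 0) = 0 \<and>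
         (\<forall>z. z \<noteq> 0 \<longrightarrow>
            ereal (normM M (rvec z)) \<le> hopf_lax M \<T> (\<lambda>y. ereal (normM M (rvec y))) z)"
proof (intro conjI allI impI)
  show "normM M (rvec 0) = 0" by simp
next
  fix z :: "int^'n"
  show "ereal (normM M (rvec z)) \<le> hopf_lax M \<T> (\<lambda>y. ereal (normM M (rvec y))) z"
    unfolding hopf_lax_def
  proof (rule Inf_greatest, clarify)
    fix S and \<alpha> :: "int^'n \<Rightarrow> real"
    assume "\<forall>v\<in>S. 0 \<le> \<alpha> v" and "sum \<alpha> S = 1"
    then have "normM M (rvec z) \<le> normM M (\<Sum>v\<in>S. \<alpha> v *\<^sub>R rvec v)
        + (\<Sum>v\<in>S. \<alpha> v * normM M (rvec (z + v)))"
      using normM_le_convex_combination[OF assms(1)] by (simp add: rvec_add)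
    then show "ereal (normM M (rvec z)) \<le> ereal (normM M (\<Sum>v\<in>S. \<alpha> v *\<^sub>R rvec v))
        + (\<Sum>v\<in>S. ereal (\<alpha> v) * ereal (normM M (rvec (z + v))))"
      by (simp add: sum_ereal)
  qed
qed

end
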